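(* Let $\Omega=(0,1)\times(0,1)\subset\mathbb{R}^2$ and let $h:[0,1]\to\mathbb{R}$ be a bounded function with $h(0)=0$, $h(x_1)>0$ for $x_1\in(0,1]$, $h\in C^1(0,1]$, and suppose there exist constants $C>0$ and $\theta\in(0,1)$ such that $$\sup_{x\in\Omega,\ 0<r\le d}\frac{\int_{B(x,r)\cap\Omega}h(x_1)^{-1}\,dx}{|B(x,r)\cap\Omega|^{\theta}}\le C,$$ where $d$ is the diameter of $\Omega$. Then $\mathcal{H}_h^1(\Omega)$ is continuously embedded into $W^{1,1}(\Omega)$.
   Context: $B(x,r)$ is the Euclidean ball with center $x$ and radius $r$, $|\cdot|$ is Lebesgue measure. $\mathcal{H}_h^1(\Omega)=\{u\in L^2(\Omega)\mid \partial_{x_1}u\in L^2(\Omega),\ \sqrt{h(x_1)}\,\partial_{x_2}u\in L^2(\Omega)\}$ (distributional derivatives), with norm $\|u\|_{\mathcal{H}_h^1(\Omega)}=\big(\|u\|_{L^2(\Omega)}^2+\|\partial_{x_1}u\|_{L^2(\Omega)}^2+\|\sqrt{h(x_1)}\partial_{x_2}u\|_{L^2(\Omega)}^2\big)^{1/2}$. *)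

theory Defs
  imports "HOL-Analysis.Analysis"
begin

text \<open>The unit square, as a subset of real x real (Euclidean product metric, Lebesgue measure).\<close>
definition Omega :: "(real \<times> real) set" where
  "Omega = {0<..<1} \<times> {0<..<1}"

definition pd1 :: "(real \<times> real \<Rightarrow> real) \<Rightarrow> real \<times> real \<Rightarrow> real" where
  "pd1 f = (\<lambda>(x, y). deriv (\<lambda>t. f (t, y)) x)"

definition pd2 :: "(real \<times> real \<Rightarrow> real) \<Rightarrow> real \<times> real \<Rightarrow> real" where
  "pd2 f = (\<lambda>(x, y). deriv (\<lambda>t. f (x, t)) y)"

fun Ck :: "nat \<Rightarrow> (real \<times> real \<Rightarrow> real) set" where
  "Ck 0 = {f. continuous_on UNIV f}"
| "Ck (Suc k) = {f. (\<forall>z. f differentiable (at z)) \<and> pd1 f \<in> Ck k \<and> pd2 f \<in> Ck k}"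

definition smooth :: "(real \<times> real \<Rightarrow> real) \<Rightarrow> bool" where
  "smooth f \<longleftrightarrow> (\<forall>k. f \<in> Ck k)"

definition test_fun :: "(real \<times> real \<Rightarrow> real) \<Rightarrow> bool" where
  "test_fun \<phi> \<longleftrightarrow> smooth \<phi> \<and> compact (closure {z. \<phi> z \<noteq> 0})
      \<and> closure {z. \<phi> z \<noteq> 0} \<subseteq> Omega"

definition loc_integrable :: "(real \<times> real \<Rightarrow> real) \<Rightarrow> bool" where
  "loc_integrable g \<longleftrightarrow> (\<forall>K. compact K \<and> K \<subseteq> Omega \<longrightarrow> integrable (lebesgue_on K) g)"

definition weak_pd1 :: "(real \<times> real \<Rightarrow> real) \<Rightarrow> (real \<times> real \<Rightarrow> real) \<Rightarrow> bool" where
  "weak_pd1 u g \<longleftrightarrow> loc_integrable u \<and> loc_integrable g \<and>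
     (\<forall>\<phi>. test_fun \<phi> \<longrightarrow>
        (\<integral>z. u z * pd1 \<phi> z \<partial>lebesgue_on Omega) = - (\<integral>z. g z * \<phi> z \<partial>lebesgue_on Omega))"

definition weak_pd2 :: "(real \<times> real \<Rightarrow> real) \<Rightarrow> (real \<times> real \<Rightarrow> real) \<Rightarrow> bool" where
  "weak_pd2 u g \<longleftrightarrow> loc_integrable u \<and> loc_integrable g \<and>
     (\<forall>\<phi>. test_fun \<phi> \<longrightarrow>
        (\<integral>z. u z * pd2 \<phi> z \<partial>lebesgue_on Omega) = - (\<integral>z. g z * \<phi> z \<partial>lebesgue_on Omega))"

definition L2 :: "(real \<times> real \<Rightarrow> real) \<Rightarrow> bool" where
  "L2 f \<longleftrightarrow> f \<in> borel_measurable (lebesgue_on Omega) \<and> integrable (lebesgue_on Omega) (\<lambda>z. (f z)\<^sup>2)"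

definition L1 :: "(real \<times> real \<Rightarrow> real) \<Rightarrow> bool" where
  "L1 f \<longleftrightarrow> integrable (lebesgue_on Omega) f"

definition norm_L2 :: "(real \<times> real \<Rightarrow> real) \<Rightarrow> real" where
  "norm_L2 f = sqrt (\<integral>z. (f z)\<^sup>2 \<partial>lebesgue_on Omega)"

definition norm_L1 :: "(real \<times> real \<Rightarrow> real) \<Rightarrow> real" where
  "norm_L1 f = (\<integral>z. \<bar>f z\<bar> \<partial>lebesgue_on Omega)"

definition in_Hh :: "(real \<Rightarrow> real) \<Rightarrow> (real \<times> real \<Rightarrow> real) \<Rightarrow> (real \<times> real \<Rightarrow> real)
                      \<Rightarrow> (real \<times> real \<Rightarrow> real) \<Rightarrow> bool" where
  "in_Hh h u g1 g2 \<longleftrightarrow> L2 u \<and> weak_pd1 u g1 \<and> weak_pd2 u g2 \<and> L2 g1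
      \<and> L2 (\<lambda>z. sqrt (h (fst z)) * g2 z)"

definition norm_Hh :: "(real \<Rightarrow> real) \<Rightarrow> (real \<times> real \<Rightarrow> real) \<Rightarrow> (real \<times> real \<Rightarrow> real)
                      \<Rightarrow> (real \<times> real \<Rightarrow> real) \<Rightarrow> real" where
  "norm_Hh h u g1 g2 = sqrt ((norm_L2 u)\<^sup>2 + (norm_L2 g1)\<^sup>2 + (norm_L2 (\<lambda>z. sqrt (h (fst z)) * g2 z))\<^sup>2)"

definition in_W11 :: "(real \<times> real \<Rightarrow> real) \<Rightarrow> (real \<times> real \<Rightarrow> real)
                      \<Rightarrow> (real \<times> real \<Rightarrow> real) \<Rightarrow> bool" where
  "in_W11 u g1 g2 \<longleftrightarrow> L1 u \<and> weak_pd1 u g1 \<and> weak_pd2 u g2 \<and> L1 g1 \<and> L1 g2"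

definition norm_W11 :: "(real \<times> real \<Rightarrow> real) \<Rightarrow> (real \<times> real \<Rightarrow> real)
                      \<Rightarrow> (real \<times> real \<Rightarrow> real) \<Rightarrow> real" where
  "norm_W11 u g1 g2 = norm_L1 u + norm_L1 g1 + norm_L1 g2"

end

theory Submission
  imports Defs
begin

(* The growth condition, applied to a single ball that contains Omega, makes 1/h(x_1) integrable
   on Omega. Writing the x_2-derivative as (sqrt h * d_2 u) * (1 / sqrt h), Cauchy-Schwarz bounds
   its L^1 norm by the weighted L^2 norm times the square root of the integral of 1/h; u and d_1 u
   are in L^1 simply because Omega has finite measure. Besides this one instance of the condition,
   only positivity and continuity of h on (0,1] (the latter for measurability) are used. *)

lemma Cauchy_Schwarz_integral:
  fixes f g :: "'a \<Rightarrow> real"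
  assumes [measurable]: "f \<in> borel_measurable M" "g \<in> borel_measurable M"
    and f2: "integrable M (\<lambda>x. (f x)\<^sup>2)" and g2: "integrable M (\<lambda>x. (g x)\<^sup>2)"
  shows "integrable M (\<lambda>x. f x * g x)"
    and "(\<integral>x. \<bar>f x * g x\<bar> \<partial>M) \<le> sqrt (\<integral>x. (f x)\<^sup>2 \<partial>M) * sqrt (\<integral>x. (g x)\<^sup>2 \<partial>M)"
proof -
  define F where "F = (\<integral>x. (f x)\<^sup>2 \<partial>M)"
  define G where "G = (\<integral>x. (g x)\<^sup>2 \<partial>M)"
  have F0: "0 \<le> F" and G0: "0 \<le> G"
    unfolding F_def G_def by simp_all
  have nn_square: "(\<integral>\<^sup>+x. ennreal \<bar>k x\<bar> ^ 2 \<partial>M) = ennreal (\<integral>x. (k x)\<^sup>2 \<partial>M)"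
    if "integrable M (\<lambda>x. (k x)\<^sup>2)" for k :: "'a \<Rightarrow> real"
    using nn_integral_eq_integral[OF that] by (simp add: ennreal_power)
  have CS_nn: "(\<integral>\<^sup>+x. ennreal \<bar>f x * g x\<bar> \<partial>M)\<^sup>2 \<le> ennreal (F * G)"
    using Cauchy_Schwarz_nn_integral[of "\<lambda>x. ennreal \<bar>f x\<bar>" M "\<lambda>x. ennreal \<bar>g x\<bar>"]
      nn_square[OF f2] nn_square[OF g2] F0 G0
    by (simp add: F_def G_def abs_mult ennreal_mult)
  then have "(\<integral>\<^sup>+x. ennreal \<bar>f x * g x\<bar> \<partial>M)\<^sup>2 < \<infinity>"
    by (simp add: le_less_trans)
  then have "(\<integral>\<^sup>+x. ennreal (norm (f x * g x)) \<partial>M) < \<infinity>"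
    by (simp add: power_less_top_ennreal)
  then show int: "integrable M (\<lambda>x. f x * g x)"
    by (simp add: integrable_iff_bounded)
  have "(\<integral>\<^sup>+x. ennreal \<bar>f x * g x\<bar> \<partial>M) = ennreal (\<integral>x. \<bar>f x * g x\<bar> \<partial>M)"
    using int by (intro nn_integral_eq_integral) auto
  with CS_nn have "(\<integral>x. \<bar>f x * g x\<bar> \<partial>M)\<^sup>2 \<le> F * G"
    using F0 G0 by (simp add: ennreal_power)
  then show "(\<integral>x. \<bar>f x * g x\<bar> \<partial>M) \<le> sqrt F * sqrt G"
    by (metis real_le_rsqrt real_sqrt_mult)
qed

lemma (in finite_measure) integral_abs_le_sqrt_square_integral:
  fixes f :: "'a \<Rightarrow> real"
  assumes "f \<in> borel_measurable M" "integrable M (\<lambda>x. (f x)\<^sup>2)"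
  shows "(\<integral>x. \<bar>f x\<bar> \<partial>M) \<le> sqrt (measure M (space M)) * sqrt (\<integral>x. (f x)\<^sup>2 \<partial>M)"
  using Cauchy_Schwarz_integral(2)[of f M "\<lambda>_. 1"] assms by (simp add: mult.commute)

lemma
  fixes w g :: "'a \<Rightarrow> real"
  assumes [measurable]: "w \<in> borel_measurable M"
    and weighted_g_measurable: "(\<lambda>x. sqrt (w x) * g x) \<in> borel_measurable M"
    and w_pos: "\<And>x. x \<in> space M \<Longrightarrow> 0 < w x"
    and inverse_w: "integrable M (\<lambda>x. 1 / w x)"
    and weighted_g: "integrable M (\<lambda>x. (sqrt (w x) * g x)\<^sup>2)"
  shows integrable_of_weighted_square_integrable: "integrable M g"
    and integral_abs_le_weighted_square_integral:
      "(\<integral>x. \<bar>g x\<bar> \<partial>M) \<le> sqrt (\<integral>x. (sqrt (w x) * g x)\<^sup>2 \<partial>M) * sqrt (\<integral>x. 1 / w x \<partial>M)"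
proof -
  define v where "v x = 1 / sqrt (w x)" for x
  have v_square: "(v x)\<^sup>2 = 1 / w x" if "x \<in> space M" for x
    using w_pos[OF that] by (simp add: v_def power_divide)
  have g_eq: "sqrt (w x) * g x * v x = g x" if "x \<in> space M" for x
    using w_pos[OF that] by (simp add: v_def)
  have v_measurable: "v \<in> borel_measurable M"
    unfolding v_def by measurable
  have "integrable M (\<lambda>x. (v x)\<^sup>2)"
    using inverse_w by (subst Bochner_Integration.integrable_cong[OF refl v_square]) auto
  note CS = Cauchy_Schwarz_integral[of "\<lambda>x. sqrt (w x) * g x" M v,
      OF weighted_g_measurable v_measurable weighted_g this]
  show "integrable M g"
    using CS(1) by (subst (asm) Bochner_Integration.integrable_cong[OF refl g_eq]) auto
  have "(\<integral>x. \<bar>g x\<bar> \<partial>M) = (\<integral>x. \<bar>sqrt (w x) * g x * v x\<bar> \<partial>M)"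
    by (intro Bochner_Integration.integral_cong) (simp_all add: g_eq)
  also have "(\<integral>x. (v x)\<^sup>2 \<partial>M) = (\<integral>x. 1 / w x \<partial>M)"
    by (intro Bochner_Integration.integral_cong) (simp_all add: v_square)
  ultimately show "(\<integral>x. \<bar>g x\<bar> \<partial>M) \<le> sqrt (\<integral>x. (sqrt (w x) * g x)\<^sup>2 \<partial>M) * sqrt (\<integral>x. 1 / w x \<partial>M)"
    using CS(2) by simp
qed

lemma open_Omega: "open Omega"
  by (simp add: Omega_def open_Times)

lemma bounded_Omega: "bounded Omega"
proof (rule bounded_subset)
  show "Omega \<subseteq> cbox (0, 0) (1, 1)"
    by (auto simp: Omega_def cbox_Pair_eq)
qed simp

lemma Omega_lmeasurable: "Omega \<in> lmeasurable"
  by (simp add: lmeasurable_open open_Omega bounded_Omega)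

lemma Omega_subset_ball: "Omega \<subseteq> ball (1/2, 1/2) 1"
proof (clarify)
  fix a b :: real
  assume "(a, b) \<in> Omega"
  then have "0 < a * (1 - a)" "0 < b * (1 - b)"
    by (simp_all add: Omega_def)
  moreover have "(1/2 - t)\<^sup>2 = 1/4 - t * (1 - t)" for t :: real
    by (simp add: power2_eq_square algebra_simps)
  ultimately have "(1/2 - a)\<^sup>2 + (1/2 - b)\<^sup>2 < 1"
    by simp
  then show "(a, b) \<in> ball (1/2, 1/2) 1"
    by (simp add: dist_Pair_Pair dist_real_def)
qed

lemma one_le_diameter_Omega: "1 \<le> diameter Omega"
proof -
  have "dist (1/10, 1/10) (9/10 :: real, 9/10 :: real) \<le> diameter Omega"
    using bounded_Omega by (intro diameter_bounded_bound) (auto simp: Omega_def)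
  moreover have "dist (1/10, 1/10) (9/10 :: real, 9/10 :: real) = sqrt (128/100)"
    by (simp add: dist_Pair_Pair dist_real_def power2_eq_square)
  moreover have "1 \<le> sqrt (128/100 :: real)"
    by simp
  ultimately show ?thesis
    by linarith
qed

lemma finite_measure_lebesgue_on_Omega: "finite_measure (lebesgue_on Omega)"
  using Omega_lmeasurable by (rule finite_measure_lebesgue_on)

lemma
  assumes "L2 f"
  shows L2_imp_L1: "L1 f"
    and norm_L1_le_norm_L2: "norm_L1 f \<le> sqrt (measure lebesgue Omega) * norm_L2 f"
proof -
  interpret finite_measure "lebesgue_on Omega"
    by (rule finite_measure_lebesgue_on_Omega)
  have "f \<in> borel_measurable (lebesgue_on Omega)" "integrable (lebesgue_on Omega) (\<lambda>z. (f z)\<^sup>2)"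
    using assms by (simp_all add: L2_def)
  note f = this
  show "L1 f"
    unfolding L1_def using f by (rule square_integrable_imp_integrable)
  have "measure (lebesgue_on Omega) (space (lebesgue_on Omega)) = measure lebesgue Omega"
    using Omega_lmeasurable by (simp add: measure_restrict_space)
  then show "norm_L1 f \<le> sqrt (measure lebesgue Omega) * norm_L2 f"
    using integral_abs_le_sqrt_square_integral[OF f] by (simp add: norm_L1_def norm_L2_def)
qed

lemma
  fixes H g :: "real \<times> real \<Rightarrow> real"
  assumes "H \<in> borel_measurable (lebesgue_on Omega)" "\<And>z. z \<in> Omega \<Longrightarrow> 0 < H z"
    and "integrable (lebesgue_on Omega) (\<lambda>z. 1 / H z)"
    and "L2 (\<lambda>z. sqrt (H z) * g z)"
  shows weighted_L2_imp_L1: "L1 g"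
    and norm_L1_le_weighted_norm_L2:
      "norm_L1 g \<le> sqrt (\<integral>z. 1 / H z \<partial>lebesgue_on Omega) * norm_L2 (\<lambda>z. sqrt (H z) * g z)"
proof -
  have "(\<lambda>z. sqrt (H z) * g z) \<in> borel_measurable (lebesgue_on Omega)"
    "integrable (lebesgue_on Omega) (\<lambda>z. (sqrt (H z) * g z)\<^sup>2)"
    using assms(4) by (simp_all add: L2_def)
  note weighted = assms(1) this(1) _ assms(3) this(2)
  show "L1 g"
    unfolding L1_def using assms(2) by (intro integrable_of_weighted_square_integrable[OF weighted]) simp
  show "norm_L1 g \<le> sqrt (\<integral>z. 1 / H z \<partial>lebesgue_on Omega) * norm_L2 (\<lambda>z. sqrt (H z) * g z)"
    unfolding norm_L1_def norm_L2_def mult.commute[of "sqrt (\<integral>z. 1 / H z \<partial>lebesgue_on Omega)"]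
    using assms(2) by (intro integral_abs_le_weighted_square_integral[OF weighted]) simp
qed

lemma
  shows norm_L2_le_norm_Hh: "norm_L2 u \<le> norm_Hh h u g1 g2"
    and norm_L2_derivative_le_norm_Hh: "norm_L2 g1 \<le> norm_Hh h u g1 g2"
    and weighted_norm_L2_le_norm_Hh:
      "norm_L2 (\<lambda>z. sqrt (h (fst z)) * g2 z) \<le> norm_Hh h u g1 g2"
  unfolding norm_Hh_def by (auto intro!: real_le_rsqrt)

lemma integral_inverse_weight_nonneg:
  fixes H :: "real \<times> real \<Rightarrow> real"
  assumes "\<And>z. z \<in> Omega \<Longrightarrow> 0 < H z"
  shows "0 \<le> (\<integral>z. 1 / H z \<partial>lebesgue_on Omega)"
  using assms by (auto simp: less_imp_le intro!: integral_nonneg_AE AE_I2)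

lemma norm_Hh_nonneg: "0 \<le> norm_Hh h u g1 g2"
  by (simp add: norm_Hh_def)

lemma
  fixes h :: "real \<Rightarrow> real"
  assumes H_measurable: "(\<lambda>z. h (fst z)) \<in> borel_measurable (lebesgue_on Omega)"
    and H_pos: "\<And>z. z \<in> Omega \<Longrightarrow> 0 < h (fst z)"
    and inverse_h: "integrable (lebesgue_on Omega) (\<lambda>z. 1 / h (fst z))"
    and "in_Hh h u g1 g2"
  shows in_Hh_imp_in_W11: "in_W11 u g1 g2"
    and norm_W11_le_norm_Hh: "norm_W11 u g1 g2 \<le>
      (2 * sqrt (measure lebesgue Omega) + sqrt (\<integral>z. 1 / h (fst z) \<partial>lebesgue_on Omega)) * norm_Hh h u g1 g2"
proof -
  define m where "m = sqrt (measure lebesgue Omega)"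
  define B where "B = sqrt (\<integral>z. 1 / h (fst z) \<partial>lebesgue_on Omega)"
  have "0 \<le> m" "0 \<le> B"
    using integral_inverse_weight_nonneg[OF H_pos] by (simp_all add: m_def B_def)
  have L2: "L2 u" "L2 g1" "L2 (\<lambda>z. sqrt (h (fst z)) * g2 z)"
    and weak: "weak_pd1 u g1" "weak_pd2 u g2"
    using \<open>in_Hh h u g1 g2\<close> by (simp_all add: in_Hh_def)
  note weighted = H_measurable H_pos inverse_h L2(3)
  show "in_W11 u g1 g2"
    using L2_imp_L1[OF L2(1)] L2_imp_L1[OF L2(2)] weighted_L2_imp_L1[OF weighted] weak
    by (simp add: in_W11_def)
  have "norm_W11 u g1 g2 \<le> m * norm_L2 u + m * norm_L2 g1 + B * norm_L2 (\<lambda>z. sqrt (h (fst z)) * g2 z)"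
    unfolding norm_W11_def m_def B_def
    using norm_L1_le_norm_L2[OF L2(1)] norm_L1_le_norm_L2[OF L2(2)]
      norm_L1_le_weighted_norm_L2[OF weighted]
    by (intro add_mono)
  also have "\<dots> \<le> (2 * m + B) * norm_Hh h u g1 g2"
    using mult_left_mono[OF norm_L2_le_norm_Hh[of u h g1 g2] \<open>0 \<le> m\<close>]
      mult_left_mono[OF norm_L2_derivative_le_norm_Hh[of g1 h u g2] \<open>0 \<le> m\<close>]
      mult_left_mono[OF weighted_norm_L2_le_norm_Hh[of h g2 u g1] \<open>0 \<le> B\<close>]
    by (simp add: distrib_right)
  finally show "norm_W11 u g1 g2 \<le> (2 * m + B) * norm_Hh h u g1 g2" .
qed

lemma borel_measurable_comp_fst_Omega:
  assumes "continuous_on {0<..1} h"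
  shows "(\<lambda>z. h (fst z)) \<in> borel_measurable (lebesgue_on Omega)"
proof -
  have "continuous_on Omega (\<lambda>z. h (fst z))"
    using assms by (rule continuous_on_compose2[OF _ continuous_on_fst]) (auto simp: Omega_def)
  then show ?thesis
    using Omega_lmeasurable by (intro continuous_imp_measurable_on_sets_lebesgue) auto
qed

lemma integrable_inverse_weight_Omega:
  fixes H :: "real \<times> real \<Rightarrow> real" and C \<theta> :: real
  assumes H_measurable: "H \<in> borel_measurable (lebesgue_on Omega)"
    and H_pos: "\<And>z. z \<in> Omega \<Longrightarrow> 0 < H z"
    and cond: "\<forall>x\<in>Omega. \<forall>r. 0 < r \<and> r \<le> diameter Omega \<longrightarrow>
        (\<integral>\<^sup>+ y \<in> ball x r \<inter> Omega. ennreal (1 / H y) \<partial>lebesgue)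
          \<le> ennreal (C * (measure lebesgue (ball x r \<inter> Omega)) powr \<theta>)"
  shows "integrable (lebesgue_on Omega) (\<lambda>z. 1 / H z)"
proof -
  have centre: "(1/2, 1/2) \<in> Omega"
    by (simp add: Omega_def)
  have radius: "0 < (1::real) \<and> 1 \<le> diameter Omega"
    using one_le_diameter_Omega by simp
  have "ball (1/2, 1/2) 1 \<inter> Omega = Omega"
    using Omega_subset_ball by blast
  then have "(\<integral>\<^sup>+ y \<in> Omega. ennreal (1 / H y) \<partial>lebesgue) \<le> ennreal (C * (measure lebesgue Omega) powr \<theta>)"
    using cond[rule_format, OF centre radius] by simp
  moreover have "(\<integral>\<^sup>+ y. ennreal (norm (1 / H y)) \<partial>lebesgue_on Omega)
      = (\<integral>\<^sup>+ y. ennreal (1 / H y) \<partial>lebesgue_on Omega)"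
    using H_pos by (intro nn_integral_cong) (simp add: less_imp_le)
  moreover have "(\<integral>\<^sup>+ y. ennreal (1 / H y) \<partial>lebesgue_on Omega)
      = (\<integral>\<^sup>+ y \<in> Omega. ennreal (1 / H y) \<partial>lebesgue)"
    using Omega_lmeasurable by (simp add: nn_integral_restrict_space)
  ultimately have "(\<integral>\<^sup>+ y. ennreal (norm (1 / H y)) \<partial>lebesgue_on Omega) < \<infinity>"
    by (simp add: le_less_trans)
  then show ?thesis
    using H_measurable by (simp add: integrable_iff_bounded)
qed

theorem lemma2p3:
  fixes h :: "real \<Rightarrow> real" and C \<theta> :: real
  assumes h_bdd: "bounded (h ` {0..1})"
    and h0: "h 0 = 0"
    and hpos: "\<forall>x\<in>{0<..1}. h x > 0"
    and hC1: "\<exists>h'. (\<forall>x\<in>{0<..1}. (h has_real_derivative h' x) (at x within {0<..1}))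
                  \<and> continuous_on {0<..1} h'"
    and C_pos: "C > 0" and \<theta>: "0 < \<theta>" "\<theta> < 1"
    and cond: "\<forall>x\<in>Omega. \<forall>r. 0 < r \<and> r \<le> diameter Omega \<longrightarrow>
        (\<integral>\<^sup>+ y \<in> ball x r \<inter> Omega. ennreal (1 / h (fst y)) \<partial>lebesgue)
          \<le> ennreal (C * (measure lebesgue (ball x r \<inter> Omega)) powr \<theta>)"
  shows "\<exists>K>0. \<forall>u g1 g2. in_Hh h u g1 g2 \<longrightarrow>
            in_W11 u g1 g2 \<and> norm_W11 u g1 g2 \<le> K * norm_Hh h u g1 g2"
proof -
  obtain h' where "\<forall>x\<in>{0<..1}. (h has_real_derivative h' x) (at x within {0<..1})"
    using hC1 by blast
  then have "continuous_on {0<..1} h"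
    unfolding continuous_on_eq_continuous_within using DERIV_continuous by blast
  then have H_measurable: "(\<lambda>z. h (fst z)) \<in> borel_measurable (lebesgue_on Omega)"
    by (rule borel_measurable_comp_fst_Omega)
  have H_pos: "\<And>z. z \<in> Omega \<Longrightarrow> 0 < h (fst z)"
    using hpos by (auto simp: Omega_def)
  note inverse_h = integrable_inverse_weight_Omega[OF H_measurable H_pos cond]
  define K where "K = 2 * sqrt (measure lebesgue Omega) + sqrt (\<integral>z. 1 / h (fst z) \<partial>lebesgue_on Omega)"
  have "0 \<le> K"
    using integral_inverse_weight_nonneg[OF H_pos] by (simp add: K_def)
  have "norm_W11 u g1 g2 \<le> (K + 1) * norm_Hh h u g1 g2" if "in_Hh h u g1 g2" for u g1 g2
  proof -
    have "norm_W11 u g1 g2 \<le> K * norm_Hh h u g1 g2"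
      unfolding K_def by (rule norm_W11_le_norm_Hh[OF H_measurable H_pos inverse_h that])
    also have "\<dots> \<le> (K + 1) * norm_Hh h u g1 g2"
      by (intro mult_right_mono norm_Hh_nonneg) simp
    finally show ?thesis .
  qed
  moreover have "0 < K + 1"
    using \<open>0 \<le> K\<close> by simp
  ultimately show ?thesis
    using in_Hh_imp_in_W11[OF H_measurable H_pos inverse_h] by blast
qed

end
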